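(* Let $C$ and $\bar{C}$ be categories, each with a final object ($pt$, resp. $\bar{pt}$), fiber products, a class of confined maps, a class of independent squares and a class of allowable maps (all as described in the context), let $\bar{\ }: C\to\bar{C}$ be a functor respecting these structures, and let $F$ be a partial weak bivariant theory on $C$ and $H$ a partial weak bivariant theory on $\bar{C}$. Assume every map $X\to pt$ in $C$ (resp. $\bar X\to\bar{pt}$ in $\bar C$) is allowable, that $F_*(pt):=F(pt\to pt)$ contains an element $1_{pt}$ with $\alpha\bullet 1_{pt}=\alpha$ for all $\alpha\in F_*(X):=F(X\to pt)$ and all $X$, similarly $1_{\bar{pt}}\in H_*(\bar{pt})$ for $H$, and that every commutative square whose horizontal maps are identities (i.e. $g=\mathrm{id}_Y$, $g'=\mathrm{id}_X$, vertical maps both equal to some $f$) is independent. Let $c_*:F_*\to H_*$ be a natural transformation of the associated covariant theories (i.e. a family of homomorphisms $c_*:F(X\to pt)\to H(\bar X\to\bar{pt})$ with $c_*\circ f_*=\bar f_*\circ c_*$ for confined $f$) with $c_*(1_{pt})=1_{\bar{pt}}$. Fix a class of orientable objects of $C$ containing $pt$, with distinguished elements $e_Y\in F_*(Y)$ such that $c_*(e_Y)$ is a strong orientation in $H$ and $e_{pt}=1_{pt}$, and for each o-allowable $f:X\to Y$ let $\gamma_f:F(f:X\to Y)\to H(\bar f:\bar X\to\bar Y)$ be the unique homomorphism with $c_*(\alpha\bullet e_Y)=\gamma_f(\alpha)\,\bar\bullet\,c_*(e_Y)$ for all $\alpha$. Let $f:X\to Y$ be o-allowable and let $\alpha\in F(f:X\to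 Y)$ satisfy $c_*(\alpha\bullet\beta)=\gamma_f(\alpha)\,\bar\bullet\,c_*(\beta)$ for every $\beta\in F_*(Y)$. Then for every o-allowable $g:Y\to Z$ and every $\beta\in F(g:Y\to Z)$ one has $$\gamma_{g\circ f}(\alpha\bullet\beta)=\gamma_f(\alpha)\,\bar\bullet\,\gamma_g(\beta).$$
   Context: Setting (following Fulton–MacPherson). A category $C$ has a final object $pt$ and fiber products, a class of confined maps (closed under composition and base change, containing identities) and a class of independent squares (fiber squares, closed under vertical and horizontal composition, containing every square, or its transpose, whose two parallel sides are identity maps). A class of allowable maps is closed under composition and such that $g\circ f$ is allowable whenever $f$ is confined and $g$ allowable. A partial weak bivariant theory $T$ assigns to each allowable $f:X\to Y$ an abelian group $T(f:X\to Y)$ with: a product $\bullet:T(f:X\to Y)\times T(g:Y\to Z)\to T(g\circ f:X\to Z)$ (for $f,g$ allowable); a push-forward $f_*:T(g\circ f:X\to Z)\to T(g:Y\to Z)$ for $f$ confined and $g$ allowable; a pull-back $g^*:T(f:X\to Y)\to T(f':X'\to Y')$ for every independent square with $X'\to X$ over $g:Y'\to Y$ and $f,f'$ allowable; satisfying, for allowable maps, associativity of product, functoriality of push-forward and pull-back, and compatibility of product with push-forward, of product with pull-back, and of push-forward with pull-back (the bivariant projection formula is not required). A functor $\bar{\ }:C\to\bar C$ "respecting the structures" preserves final objects, confined maps, independent squares and allowable maps. For $H$ on $\bar C$, an element $\theta\in H(g:Y\to Z)$ is a strong orientation if $-\bullet\theta: H(f':X'\to Y)\to H(g\circ f':X'\to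 Z)$ is an isomorphism for all $f':X'\to Y$ (with the relevant maps allowable). A morphism $f:X\to Y$ of $C$ is o-allowable if it is allowable and $Y$ is orientable. The product in $H$ is written $\bar\bullet$. *)

theory Defs
  imports "HOL-Algebra.Group"
begin

text \<open>Composition convention: cmp C g f = g o f.
A square (f, g, f', g') denotes
   X' --g'--> X
   |f'        |f
   Y' --g-->  Y
i.e. f: X -> Y, g: Y' -> Y, f': X' -> Y', g': X' -> X.\<close>

record ('o, 'm) fmcat =
  obj :: "'o set"
  mor :: "'m set"
  src :: "'m \<Rightarrow> 'o"
  tgt :: "'m \<Rightarrow> 'o"
  cmp :: "'m \<Rightarrow> 'm \<Rightarrow> 'm"
  ident :: "'o \<Rightarrow> 'm"
  pt :: "'o"
  confined :: "'m set"
  indep :: "('m \<times> 'm \<times> 'm \<times> 'm) set"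
  allowable :: "'m set"

definition arr :: "('o, 'm, 'x) fmcat_scheme \<Rightarrow> 'm \<Rightarrow> 'o \<Rightarrow> 'o \<Rightarrow> bool" where
  "arr C m X Y \<longleftrightarrow> m \<in> mor C \<and> src C m = X \<and> tgt C m = Y"

definition is_category :: "('o, 'm, 'x) fmcat_scheme \<Rightarrow> bool" where
  "is_category C \<longleftrightarrow>
     (\<forall>m\<in>mor C. src C m \<in> obj C \<and> tgt C m \<in> obj C) \<and>
     (\<forall>X\<in>obj C. arr C (ident C X) X X) \<and>
     (\<forall>f\<in>mor C. \<forall>g\<in>mor C. tgt C f = src C g \<longrightarrow>
          arr C (cmp C g f) (src C f) (tgt C g)) \<and>
     (\<forall>f\<in>mor C. cmp C (ident C (tgt C f)) f = f \<and> cmp C f (ident C (src C f)) = f) \<and>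
     (\<forall>f\<in>mor C. \<forall>g\<in>mor C. \<forall>h\<in>mor C. tgt C f = src C g \<and> tgt C g = src C h \<longrightarrow>
          cmp C h (cmp C g f) = cmp C (cmp C h g) f)"

definition has_final_object :: "('o, 'm, 'x) fmcat_scheme \<Rightarrow> bool" where
  "has_final_object C \<longleftrightarrow> pt C \<in> obj C \<and> (\<forall>X\<in>obj C. \<exists>!m. arr C m X (pt C))"

definition termap :: "('o, 'm, 'x) fmcat_scheme \<Rightarrow> 'o \<Rightarrow> 'm" where
  "termap C X = (THE m. arr C m X (pt C))"

definition commsq :: "('o, 'm, 'x) fmcat_scheme \<Rightarrow> 'm \<times> 'm \<times> 'm \<times> 'm \<Rightarrow> bool" where
  "commsq C s = (case s of (f, g, f', g') \<Rightarrow>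
     f \<in> mor C \<and> g \<in> mor C \<and> f' \<in> mor C \<and> g' \<in> mor C \<and>
     tgt C f = tgt C g \<and> src C f = tgt C g' \<and> src C f' = src C g' \<and> tgt C f' = src C g \<and>
     cmp C f g' = cmp C g f')"

definition fiber_square :: "('o, 'm, 'x) fmcat_scheme \<Rightarrow> 'm \<times> 'm \<times> 'm \<times> 'm \<Rightarrow> bool" where
  "fiber_square C s = (case s of (f, g, f', g') \<Rightarrow>
     commsq C (f, g, f', g') \<and>
     (\<forall>W\<in>obj C. \<forall>a b. arr C a W (src C f) \<and> arr C b W (src C g) \<and> cmp C f a = cmp C g b \<longrightarrow>
        (\<exists>!u. arr C u W (src C f') \<and> cmp C g' u = a \<and> cmp C f' u = b)))"

definition has_fiber_products :: "('o, 'm, 'x) fmcat_scheme \<Rightarrow> bool" where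
  "has_fiber_products C \<longleftrightarrow>
     (\<forall>f\<in>mor C. \<forall>g\<in>mor C. tgt C f = tgt C g \<longrightarrow> (\<exists>f' g'. fiber_square C (f, g, f', g')))"

definition confined_ok :: "('o, 'm, 'x) fmcat_scheme \<Rightarrow> bool" where
  "confined_ok C \<longleftrightarrow>
     confined C \<subseteq> mor C \<and>
     (\<forall>f\<in>confined C. \<forall>g\<in>confined C. tgt C f = src C g \<longrightarrow> cmp C g f \<in> confined C) \<and>
     (\<forall>f g f' g'. f \<in> confined C \<and> fiber_square C (f, g, f', g') \<longrightarrow> f' \<in> confined C) \<and>
     (\<forall>X\<in>obj C. ident C X \<in> confined C)"

definition indep_ok :: "('o, 'm, 'x) fmcat_scheme \<Rightarrow> bool" where
  "indep_ok C \<longleftrightarrow>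
     (\<forall>s\<in>indep C. fiber_square C s) \<and>
     \<comment> \<open>horizontal composition\<close>
     (\<forall>f g f' g' h f'' h'. (f, g, f', g') \<in> indep C \<and> (f', h, f'', h') \<in> indep C \<longrightarrow>
          (f, cmp C g h, f'', cmp C g' h') \<in> indep C) \<and>
     \<comment> \<open>vertical composition\<close>
     (\<forall>f1 g f1' g' f2 k f2'. (f1, g, f1', g') \<in> indep C \<and> (f2, k, f2', g) \<in> indep C \<longrightarrow>
          (cmp C f2 f1, k, cmp C f2' f1', g') \<in> indep C) \<and>
     \<comment> \<open>squares (or transposes) with two parallel sides identities\<close>
     (\<forall>f\<in>mor C. (f, ident C (tgt C f), f, ident C (src C f)) \<in> indep C \<and>
                 (ident C (tgt C f), f, ident C (src C f), f) \<in> indep C)"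

definition allowable_ok :: "('o, 'm, 'x) fmcat_scheme \<Rightarrow> bool" where
  "allowable_ok C \<longleftrightarrow>
     allowable C \<subseteq> mor C \<and>
     (\<forall>f\<in>allowable C. \<forall>g\<in>allowable C. tgt C f = src C g \<longrightarrow> cmp C g f \<in> allowable C) \<and>
     (\<forall>f\<in>confined C. \<forall>g\<in>allowable C. tgt C f = src C g \<longrightarrow> cmp C g f \<in> allowable C)"

definition fm_category :: "('o, 'm, 'x) fmcat_scheme \<Rightarrow> bool" where
  "fm_category C \<longleftrightarrow> is_category C \<and> has_final_object C \<and> has_fiber_products C \<and>
     confined_ok C \<and> indep_ok C \<and> allowable_ok C"

definition respecting_functor ::
  "('o, 'm, 'x) fmcat_scheme \<Rightarrow> ('p, 'n, 'y) fmcat_scheme \<Rightarrow> ('o \<Rightarrow> 'p) \<Rightarrow> ('m \<Rightarrow> 'n) \<Rightarrow> bool" where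
  "respecting_functor C D Fo Fm \<longleftrightarrow>
     (\<forall>X\<in>obj C. Fo X \<in> obj D) \<and>
     (\<forall>f\<in>mor C. arr D (Fm f) (Fo (src C f)) (Fo (tgt C f))) \<and>
     (\<forall>f\<in>mor C. \<forall>g\<in>mor C. tgt C f = src C g \<longrightarrow> Fm (cmp C g f) = cmp D (Fm g) (Fm f)) \<and>
     (\<forall>X\<in>obj C. Fm (ident C X) = ident D (Fo X)) \<and>
     Fo (pt C) = pt D \<and>
     (\<forall>f\<in>confined C. Fm f \<in> confined D) \<and>
     (\<forall>f g f' g'. (f, g, f', g') \<in> indep C \<longrightarrow> (Fm f, Fm g, Fm f', Fm g') \<in> indep D) \<and>
     (\<forall>f\<in>allowable C. Fm f \<in> allowable D)"

text \<open>grp T f is the abelian group T(f) (written multiplicatively, HOL-Algebra);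
bprod T f g is the product T(f) x T(g) -> T(g o f); bpush T f g is f_* : T(g o f) -> T(g);
bpull T s is the pull-back along the independent square s = (f, g, f', g'): T(f) -> T(f').\<close>

record ('m, 'a) bvt =
  grp :: "'m \<Rightarrow> 'a monoid"
  bprod :: "'m \<Rightarrow> 'm \<Rightarrow> 'a \<Rightarrow> 'a \<Rightarrow> 'a"
  bpush :: "'m \<Rightarrow> 'm \<Rightarrow> 'a \<Rightarrow> 'a"
  bpull :: "'m \<times> 'm \<times> 'm \<times> 'm \<Rightarrow> 'a \<Rightarrow> 'a"

definition pwbt :: "('o, 'm, 'x) fmcat_scheme \<Rightarrow> ('m, 'a, 'z) bvt_scheme \<Rightarrow> bool" where
  "pwbt C T \<longleftrightarrow>
     (\<forall>f\<in>allowable C. comm_group (grp T f)) \<and>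
     \<comment> \<open>product: well-defined and bilinear\<close>
     (\<forall>f\<in>allowable C. \<forall>g\<in>allowable C. tgt C f = src C g \<longrightarrow>
        (\<forall>a\<in>carrier (grp T f). \<forall>b\<in>carrier (grp T g). bprod T f g a b \<in> carrier (grp T (cmp C g f))) \<and>
        (\<forall>a\<in>carrier (grp T f). (\<lambda>b. bprod T f g a b) \<in> hom (grp T g) (grp T (cmp C g f))) \<and>
        (\<forall>b\<in>carrier (grp T g). (\<lambda>a. bprod T f g a b) \<in> hom (grp T f) (grp T (cmp C g f)))) \<and>
     \<comment> \<open>push-forward: homomorphism\<close>
     (\<forall>f\<in>confined C. \<forall>g\<in>allowable C. tgt C f = src C g \<longrightarrow>
        bpush T f g \<in> hom (grp T (cmp C g f)) (grp T g)) \<and>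
     \<comment> \<open>pull-back: homomorphism\<close>
     (\<forall>f g f' g'. (f, g, f', g') \<in> indep C \<and> f \<in> allowable C \<and> f' \<in> allowable C \<longrightarrow>
        bpull T (f, g, f', g') \<in> hom (grp T f) (grp T f')) \<and>
     \<comment> \<open>associativity of product\<close>
     (\<forall>f\<in>allowable C. \<forall>g\<in>allowable C. \<forall>h\<in>allowable C.
        tgt C f = src C g \<and> tgt C g = src C h \<longrightarrow>
        (\<forall>a\<in>carrier (grp T f). \<forall>b\<in>carrier (grp T g). \<forall>c\<in>carrier (grp T h).
           bprod T (cmp C g f) h (bprod T f g a b) c = bprod T f (cmp C h g) a (bprod T g h b c))) \<and>
     \<comment> \<open>functoriality of push-forward\<close>
     (\<forall>f\<in>confined C. \<forall>g\<in>confined C. \<forall>h\<in>allowable C.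
        tgt C f = src C g \<and> tgt C g = src C h \<longrightarrow>
        (\<forall>a\<in>carrier (grp T (cmp C h (cmp C g f))).
           bpush T (cmp C g f) h a = bpush T g h (bpush T f (cmp C h g) a))) \<and>
     (\<forall>h\<in>allowable C. \<forall>a\<in>carrier (grp T h). bpush T (ident C (src C h)) h a = a) \<and>
     \<comment> \<open>functoriality of pull-back\<close>
     (\<forall>f g f' g' h f'' h'. (f, g, f', g') \<in> indep C \<and> (f', h, f'', h') \<in> indep C \<and>
        f \<in> allowable C \<and> f' \<in> allowable C \<and> f'' \<in> allowable C \<longrightarrow>
        (\<forall>a\<in>carrier (grp T f).
           bpull T (f, cmp C g h, f'', cmp C g' h') a = bpull T (f', h, f'', h') (bpull T (f, g, f', g') a))) \<and>
     (\<forall>f\<in>allowable C. \<forall>a\<in>carrier (grp T f).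
        bpull T (f, ident C (tgt C f), f, ident C (src C f)) a = a) \<and>
     \<comment> \<open>product and push-forward\<close>
     (\<forall>f\<in>confined C. \<forall>g\<in>allowable C. \<forall>h\<in>allowable C.
        tgt C f = src C g \<and> tgt C g = src C h \<longrightarrow>
        (\<forall>a\<in>carrier (grp T (cmp C g f)). \<forall>b\<in>carrier (grp T h).
           bprod T g h (bpush T f g a) b = bpush T f (cmp C h g) (bprod T (cmp C g f) h a b))) \<and>
     \<comment> \<open>product and pull-back\<close>
     (\<forall>f h' f' h'' g h g'. (f, h', f', h'') \<in> indep C \<and> (g, h, g', h') \<in> indep C \<and>
        f \<in> allowable C \<and> g \<in> allowable C \<and> f' \<in> allowable C \<and> g' \<in> allowable C \<longrightarrow>
        (\<forall>a\<in>carrier (grp T f). \<forall>b\<in>carrier (grp T g).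
           bpull T (cmp C g f, h, cmp C g' f', h'') (bprod T f g a b) =
           bprod T f' g' (bpull T (f, h', f', h'') a) (bpull T (g, h, g', h') b))) \<and>
     \<comment> \<open>push-forward and pull-back\<close>
     (\<forall>f h' f' h'' g h g'. (f, h', f', h'') \<in> indep C \<and> (g, h, g', h') \<in> indep C \<and>
        f \<in> confined C \<and> g \<in> allowable C \<and> g' \<in> allowable C \<longrightarrow>
        (\<forall>a\<in>carrier (grp T (cmp C g f)).
           bpush T f' g' (bpull T (cmp C g f, h, cmp C g' f', h'') a) = bpull T (g, h, g', h') (bpush T f g a)))"

definition strong_orientation ::
  "('o, 'm, 'x) fmcat_scheme \<Rightarrow> ('m, 'a, 'z) bvt_scheme \<Rightarrow> 'm \<Rightarrow> 'a \<Rightarrow> bool" where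
  "strong_orientation C T g \<theta> \<longleftrightarrow>
     \<theta> \<in> carrier (grp T g) \<and>
     (\<forall>f'\<in>allowable C. tgt C f' = src C g \<longrightarrow>
        (\<lambda>a. bprod T f' g a \<theta>) \<in> iso (grp T f') (grp T (cmp C g f')))"

end

theory Submission
  imports Defs
begin

text \<open>Since \<open>c\<^sub>*(e\<^sub>Z)\<close> is a strong orientation, right multiplication by it is injective,
so \<open>\<gamma>\<^bsub>g\<circ>f\<^esub>(\<alpha>\<bullet>\<beta>)\<close> is determined by \<open>\<gamma>\<^bsub>g\<circ>f\<^esub>(\<alpha>\<bullet>\<beta>) \<bullet> c\<^sub>*(e\<^sub>Z) = c\<^sub>*((\<alpha>\<bullet>\<beta>)\<bullet>e\<^sub>Z)\<close>.
Associativity in \<open>F\<close>, the hypothesis on \<open>\<alpha>\<close> (applied to \<open>\<beta>\<bullet>e\<^sub>Z \<in> F\<^sub>*(Y)\<close>), the defining property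
of \<open>\<gamma>\<^sub>g\<close> and associativity in \<open>H\<close> rewrite the right-hand side as
\<open>(\<gamma>\<^sub>f(\<alpha>) \<bullet> \<gamma>\<^sub>g(\<beta>)) \<bullet> c\<^sub>*(e\<^sub>Z)\<close>.\<close>

lemma fm_category_allowable_mor:
  "fm_category C \<Longrightarrow> f \<in> allowable C \<Longrightarrow> f \<in> mor C"
  unfolding fm_category_def allowable_ok_def by blast

lemma is_category_src_tgt_obj:
  "is_category C \<Longrightarrow> f \<in> mor C \<Longrightarrow> src C f \<in> obj C \<and> tgt C f \<in> obj C"
  unfolding is_category_def by blast

lemma is_category_cmp_arr:
  "is_category C \<Longrightarrow> f \<in> mor C \<Longrightarrow> g \<in> mor C \<Longrightarrow> tgt C f = src C g
    \<Longrightarrow> arr C (cmp C g f) (src C f) (tgt C g)"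
  unfolding is_category_def by blast

lemma fm_category_allowable_tgt_obj:
  assumes "fm_category C" and "f \<in> allowable C"
  shows "tgt C f \<in> obj C"
  using assms(1) is_category_src_tgt_obj[OF _ fm_category_allowable_mor[OF assms]]
  unfolding fm_category_def by simp

lemma fm_category_allowable_comp:
  assumes "fm_category C" and "f \<in> allowable C" and "g \<in> allowable C" and "tgt C f = src C g"
  shows "cmp C g f \<in> allowable C" and "src C (cmp C g f) = src C f"
    and "tgt C (cmp C g f) = tgt C g"
proof -
  show "cmp C g f \<in> allowable C"
    using assms unfolding fm_category_def allowable_ok_def by blast
  have "is_category C"
    using assms(1) unfolding fm_category_def by simp
  then have "arr C (cmp C g f) (src C f) (tgt C g)"
    using is_category_cmp_arr[OF _ fm_category_allowable_mor[OF assms(1,2)]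
        fm_category_allowable_mor[OF assms(1,3)] assms(4)] by blast
  then show "src C (cmp C g f) = src C f" and "tgt C (cmp C g f) = tgt C g"
    unfolding arr_def by simp_all
qed

lemma termap_arr:
  assumes "has_final_object C" and "X \<in> obj C"
  shows "arr C (termap C X) X (pt C)"
  using assms unfolding has_final_object_def termap_def by (metis theI')

lemma termap_unique:
  assumes "has_final_object C" and "X \<in> obj C" and "arr C m X (pt C)"
  shows "m = termap C X"
  using assms termap_arr unfolding has_final_object_def by metis

lemma termap_src:
  assumes "has_final_object C" and "X \<in> obj C"
  shows "src C (termap C X) = X"
  using termap_arr[OF assms] unfolding arr_def by blast

lemma termap_comp:
  assumes "is_category C" and "has_final_object C" and "f \<in> mor C"
  shows "cmp C (termap C (tgt C f)) f = termap C (src C f)"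
proof -
  have X: "src C f \<in> obj C" and Y: "tgt C f \<in> obj C"
    using is_category_src_tgt_obj[OF assms(1,3)] by simp_all
  have "termap C (tgt C f) \<in> mor C" "tgt C f = src C (termap C (tgt C f))"
    "tgt C (termap C (tgt C f)) = pt C"
    using termap_arr[OF assms(2) Y] unfolding arr_def by simp_all
  then have "arr C (cmp C (termap C (tgt C f)) f) (src C f) (pt C)"
    using is_category_cmp_arr[OF assms(1,3)] by metis
  then show ?thesis
    using termap_unique[OF assms(2) X] by blast
qed

lemma pwbt_bprod_closed:
  assumes "pwbt C T" and "f \<in> allowable C" and "g \<in> allowable C" and "tgt C f = src C g"
    and "a \<in> carrier (grp T f)" and "b \<in> carrier (grp T g)"
  shows "bprod T f g a b \<in> carrier (grp T (cmp C g f))"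
  using assms(1) unfolding pwbt_def using assms(2-) by (elim conjE) blast

lemma pwbt_bprod_assoc:
  assumes "pwbt C T" and "f \<in> allowable C" and "g \<in> allowable C" and "h \<in> allowable C"
    and "tgt C f = src C g" and "tgt C g = src C h"
    and "a \<in> carrier (grp T f)" and "b \<in> carrier (grp T g)" and "c \<in> carrier (grp T h)"
  shows "bprod T (cmp C g f) h (bprod T f g a b) c = bprod T f (cmp C h g) a (bprod T g h b c)"
  using assms(1) unfolding pwbt_def using assms(2-) by (elim conjE) blast

lemma fm_category_termap_comp:
  assumes "fm_category C" and "g \<in> allowable C"
  shows "src C (termap C (tgt C g)) = tgt C g"
    and "cmp C (termap C (tgt C g)) g = termap C (src C g)"
proof -
  have cat: "is_category C" and fin: "has_final_object C"
    using assms(1) unfolding fm_category_def by simp_all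
  have g: "g \<in> mor C"
    using fm_category_allowable_mor[OF assms] .
  show "src C (termap C (tgt C g)) = tgt C g"
    using termap_src[OF fin] is_category_src_tgt_obj[OF cat g] by simp
  show "cmp C (termap C (tgt C g)) g = termap C (src C g)"
    using termap_comp[OF cat fin g] .
qed

lemma pwbt_bprod_termap_closed:
  assumes "fm_category C" and "pwbt C T" and "g \<in> allowable C"
    and "termap C (tgt C g) \<in> allowable C"
    and "b \<in> carrier (grp T g)" and "c \<in> carrier (grp T (termap C (tgt C g)))"
  shows "bprod T g (termap C (tgt C g)) b c \<in> carrier (grp T (termap C (src C g)))"
proof -
  note comp = fm_category_termap_comp[OF assms(1,3)]
  show ?thesis
    using pwbt_bprod_closed[OF assms(2-4) comp(1)[symmetric] assms(5,6)] by (simp only: comp(2))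
qed

lemma pwbt_bprod_assoc_termap:
  assumes "fm_category C" and "pwbt C T" and "f \<in> allowable C" and "g \<in> allowable C"
    and "tgt C f = src C g" and "termap C (tgt C g) \<in> allowable C"
    and "a \<in> carrier (grp T f)" and "b \<in> carrier (grp T g)"
    and "c \<in> carrier (grp T (termap C (tgt C g)))"
  shows "bprod T (cmp C g f) (termap C (tgt C g)) (bprod T f g a b) c
       = bprod T f (termap C (tgt C f)) a (bprod T g (termap C (tgt C g)) b c)"
proof -
  note comp = fm_category_termap_comp[OF assms(1,4)]
  show ?thesis
    using pwbt_bprod_assoc[OF assms(2,3,4,6,5) comp(1)[symmetric] assms(7-9)]
    by (simp only: comp(2) assms(5))
qed

lemma strong_orientation_cancel:
  assumes "strong_orientation C T g \<theta>" and "h \<in> allowable C" and "tgt C h = src C g"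
    and "a \<in> carrier (grp T h)" and "b \<in> carrier (grp T h)"
    and "bprod T h g a \<theta> = bprod T h g b \<theta>"
  shows "a = b"
proof -
  have "inj_on (\<lambda>x. bprod T h g x \<theta>) (carrier (grp T h))"
    using assms(1-3) unfolding strong_orientation_def iso_def bij_betw_def by blast
  then show ?thesis
    using assms(4-6) by (auto dest: inj_onD)
qed

lemma respecting_functor_obj:
  "respecting_functor C D Fo Fm \<Longrightarrow> X \<in> obj C \<Longrightarrow> Fo X \<in> obj D"
  unfolding respecting_functor_def by blast

lemma respecting_functor_src_tgt:
  "respecting_functor C D Fo Fm \<Longrightarrow> f \<in> mor C
    \<Longrightarrow> src D (Fm f) = Fo (src C f) \<and> tgt D (Fm f) = Fo (tgt C f)"
  unfolding respecting_functor_def arr_def by blast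

lemma respecting_functor_cmp:
  "respecting_functor C D Fo Fm \<Longrightarrow> f \<in> mor C \<Longrightarrow> g \<in> mor C \<Longrightarrow> tgt C f = src C g
    \<Longrightarrow> Fm (cmp C g f) = cmp D (Fm g) (Fm f)"
  unfolding respecting_functor_def by blast

lemma respecting_functor_allowable:
  "respecting_functor C D Fo Fm \<Longrightarrow> f \<in> allowable C \<Longrightarrow> Fm f \<in> allowable D"
  unfolding respecting_functor_def by blast

lemma respecting_functor_allowable_comp:
  assumes "fm_category C" and "respecting_functor C D Fo Fm"
    and "f \<in> allowable C" and "g \<in> allowable C" and "tgt C f = src C g"
  shows "Fm f \<in> allowable D" and "Fm g \<in> allowable D"
    and "tgt D (Fm f) = src D (Fm g)" and "tgt D (Fm f) = Fo (tgt C f)"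
    and "tgt D (Fm g) = Fo (tgt C g)" and "Fm (cmp C g f) = cmp D (Fm g) (Fm f)"
proof -
  have f: "f \<in> mor C" and g: "g \<in> mor C"
    using fm_category_allowable_mor[OF assms(1)] assms(3,4) by simp_all
  show "Fm f \<in> allowable D" "Fm g \<in> allowable D"
    using respecting_functor_allowable[OF assms(2)] assms(3,4) by simp_all
  show "tgt D (Fm f) = src D (Fm g)" "tgt D (Fm f) = Fo (tgt C f)" "tgt D (Fm g) = Fo (tgt C g)"
    using respecting_functor_src_tgt[OF assms(2) f] respecting_functor_src_tgt[OF assms(2) g]
      assms(5) by simp_all
  show "Fm (cmp C g f) = cmp D (Fm g) (Fm f)"
    using respecting_functor_cmp[OF assms(2) f g assms(5)] .
qed

lemma respecting_functor_bprod_closed: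
  assumes "fm_category C" and "respecting_functor C D Fo Fm" and "pwbt D H"
    and "f \<in> allowable C" and "g \<in> allowable C" and "tgt C f = src C g"
    and "x \<in> carrier (grp H (Fm f))" and "y \<in> carrier (grp H (Fm g))"
  shows "bprod H (Fm f) (Fm g) x y \<in> carrier (grp H (Fm (cmp C g f)))"
proof -
  note Fm = respecting_functor_allowable_comp[OF assms(1,2,4-6)]
  show ?thesis
    using pwbt_bprod_closed[OF assms(3) Fm(1-3) assms(7,8)] by (simp only: Fm(6))
qed

lemma respecting_functor_bprod_assoc_termap:
  assumes "fm_category C" and "fm_category D" and "respecting_functor C D Fo Fm" and "pwbt D H"
    and "f \<in> allowable C" and "g \<in> allowable C" and "tgt C f = src C g"
    and "termap D (Fo (tgt C g)) \<in> allowable D"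
    and "x \<in> carrier (grp H (Fm f))" and "y \<in> carrier (grp H (Fm g))"
    and "z \<in> carrier (grp H (termap D (Fo (tgt C g))))"
  shows "bprod H (Fm f) (termap D (Fo (tgt C f))) x
           (bprod H (Fm g) (termap D (Fo (tgt C g))) y z)
       = bprod H (Fm (cmp C g f)) (termap D (Fo (tgt C g))) (bprod H (Fm f) (Fm g) x y) z"
proof -
  note Fm = respecting_functor_allowable_comp[OF assms(1,3,5-7)]
  show ?thesis
    using pwbt_bprod_assoc_termap[OF assms(2,4) Fm(1-3)] assms(8-11)
    by (simp add: Fm(4-6))
qed

lemma respecting_functor_strong_orientation_cancel:
  assumes "fm_category C" and "fm_category D" and "respecting_functor C D Fo Fm"
    and "strong_orientation D H (termap D (Fo Z)) \<theta>"
    and "h \<in> allowable C" and "tgt C h = Z"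
    and "x \<in> carrier (grp H (Fm h))" and "y \<in> carrier (grp H (Fm h))"
    and "bprod H (Fm h) (termap D (Fo Z)) x \<theta> = bprod H (Fm h) (termap D (Fo Z)) y \<theta>"
  shows "x = y"
proof (rule strong_orientation_cancel[OF assms(4) _ _ assms(7-9)])
  have h: "h \<in> mor C"
    using fm_category_allowable_mor[OF assms(1,5)] .
  show "Fm h \<in> allowable D"
    using respecting_functor_allowable[OF assms(3,5)] .
  have fin: "has_final_object D"
    using assms(2) unfolding fm_category_def by simp
  have "Fo Z \<in> obj D"
    using respecting_functor_obj[OF assms(3) fm_category_allowable_tgt_obj[OF assms(1,5)]] assms(6)
    by simp
  then have "src D (termap D (Fo Z)) = Fo Z"
    using termap_src[OF fin] by simp
  then show "tgt D (Fm h) = src D (termap D (Fo Z))"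
    using respecting_functor_src_tgt[OF assms(3) h] assms(6) by simp
qed

theorem mainTheorem1:
  fixes C :: "('o, 'm) fmcat" and D :: "('p, 'n) fmcat"
    and Fo :: "'o \<Rightarrow> 'p" and Fm :: "'m \<Rightarrow> 'n"
    and F :: "('m, 'a) bvt" and H :: "('n, 'b) bvt"
    and oneF :: 'a and oneH :: 'b
    and c :: "'o \<Rightarrow> 'a \<Rightarrow> 'b"
    and Or :: "'o set" and e :: "'o \<Rightarrow> 'a"
    and \<gamma> :: "'m \<Rightarrow> 'a \<Rightarrow> 'b"
    and f g :: 'm and \<alpha> \<beta> :: 'a
  assumes C: "fm_category C" and D: "fm_category D"
    and fun_resp: "respecting_functor C D Fo Fm"
    and F: "pwbt C F" and H: "pwbt D H"
    and term_allowC: "\<forall>X\<in>obj C. termap C X \<in> allowable C"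
    and term_allowD: "\<forall>X\<in>obj D. termap D X \<in> allowable D"
    and oneF: "oneF \<in> carrier (grp F (termap C (pt C)))"
    and oneF_unit: "\<forall>X\<in>obj C. \<forall>a\<in>carrier (grp F (termap C X)).
                      bprod F (termap C X) (termap C (pt C)) a oneF = a"
    and oneH: "oneH \<in> carrier (grp H (termap D (pt D)))"
    and oneH_unit: "\<forall>X\<in>obj D. \<forall>a\<in>carrier (grp H (termap D X)).
                      bprod H (termap D X) (termap D (pt D)) a oneH = a"
    and idsqC: "\<forall>h\<in>mor C. (h, ident C (tgt C h), h, ident C (src C h)) \<in> indep C"
    and idsqD: "\<forall>h\<in>mor D. (h, ident D (tgt D h), h, ident D (src D h)) \<in> indep D"
    and c_hom: "\<forall>X\<in>obj C. c X \<in> hom (grp F (termap C X)) (grp H (termap D (Fo X)))"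
    and c_nat: "\<forall>h\<in>confined C. \<forall>a\<in>carrier (grp F (termap C (src C h))).
                  c (tgt C h) (bpush F h (termap C (tgt C h)) a) =
                  bpush H (Fm h) (termap D (Fo (tgt C h))) (c (src C h) a)"
    and c_one: "c (pt C) oneF = oneH"
    and Or_sub: "Or \<subseteq> obj C" and pt_Or: "pt C \<in> Or"
    and e_mem: "\<forall>Y\<in>Or. e Y \<in> carrier (grp F (termap C Y))"
    and e_orient: "\<forall>Y\<in>Or. strong_orientation D H (termap D (Fo Y)) (c Y (e Y))"
    and e_pt: "e (pt C) = oneF"
    and \<gamma>_def: "\<forall>h. h \<in> allowable C \<and> tgt C h \<in> Or \<longrightarrow>
                  \<gamma> h \<in> hom (grp F h) (grp H (Fm h)) \<and>
                  (\<forall>a\<in>carrier (grp F h).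
                     c (src C h) (bprod F h (termap C (tgt C h)) a (e (tgt C h))) =
                     bprod H (Fm h) (termap D (Fo (tgt C h))) (\<gamma> h a) (c (tgt C h) (e (tgt C h))))"
    and f: "f \<in> allowable C" and f_Or: "tgt C f \<in> Or"
    and \<alpha>: "\<alpha> \<in> carrier (grp F f)"
    and \<alpha>_prop: "\<forall>b\<in>carrier (grp F (termap C (tgt C f))).
                   c (src C f) (bprod F f (termap C (tgt C f)) \<alpha> b) =
                   bprod H (Fm f) (termap D (Fo (tgt C f))) (\<gamma> f \<alpha>) (c (tgt C f) b)"
    and g: "g \<in> allowable C" and fg: "src C g = tgt C f" and g_Or: "tgt C g \<in> Or"
    and \<beta>: "\<beta> \<in> carrier (grp F g)"
  shows "\<gamma> (cmp C g f) (bprod F f g \<alpha> \<beta>) = bprod H (Fm f) (Fm g) (\<gamma> f \<alpha>) (\<gamma> g \<beta>)"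
proof -
  let ?X = "src C f" and ?Y = "tgt C f" and ?Z = "tgt C g" and ?gf = "cmp C g f"
  let ?eZ = "e ?Z" and ?\<theta> = "c ?Z (e ?Z)" and ?tZ = "termap C ?Z" and ?dZ = "termap D (Fo ?Z)"
  have gf: "?gf \<in> allowable C" "src C ?gf = ?X" "tgt C ?gf = ?Z"
    using fm_category_allowable_comp[OF C f g fg[symmetric]] by simp_all
  have Z: "?Z \<in> obj C"
    using fm_category_allowable_tgt_obj[OF C g] .
  have tZ: "?tZ \<in> allowable C" and dZ: "?dZ \<in> allowable D"
    using term_allowC term_allowD Z respecting_functor_obj[OF fun_resp] by simp_all
  have eZ: "?eZ \<in> carrier (grp F ?tZ)" and \<theta>: "strong_orientation D H ?dZ ?\<theta>"
    using e_mem e_orient g_Or by simp_all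
  have \<gamma>: "\<gamma> f \<in> hom (grp F f) (grp H (Fm f))" "\<gamma> g \<in> hom (grp F g) (grp H (Fm g))"
    "\<gamma> ?gf \<in> hom (grp F ?gf) (grp H (Fm ?gf))"
    using \<gamma>_def f f_Or g g_Or gf by simp_all
  have \<alpha>\<beta>: "bprod F f g \<alpha> \<beta> \<in> carrier (grp F ?gf)"
    using pwbt_bprod_closed[OF F f g fg[symmetric] \<alpha> \<beta>] .
  have \<gamma>\<alpha>: "\<gamma> f \<alpha> \<in> carrier (grp H (Fm f))" and \<gamma>\<beta>: "\<gamma> g \<beta> \<in> carrier (grp H (Fm g))"
    using hom_in_carrier[OF \<gamma>(1) \<alpha>] hom_in_carrier[OF \<gamma>(2) \<beta>] .
  have "bprod H (Fm ?gf) ?dZ (\<gamma> ?gf (bprod F f g \<alpha> \<beta>)) ?\<theta>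
      = c ?X (bprod F ?gf ?tZ (bprod F f g \<alpha> \<beta>) ?eZ)"
    using \<gamma>_def[rule_format, of ?gf] gf g_Or \<alpha>\<beta> by auto
  also have "\<dots> = c ?X (bprod F f (termap C ?Y) \<alpha> (bprod F g ?tZ \<beta> ?eZ))"
    using pwbt_bprod_assoc_termap[OF C F f g fg[symmetric] tZ \<alpha> \<beta> eZ] by simp
  also have "\<dots> = bprod H (Fm f) (termap D (Fo ?Y)) (\<gamma> f \<alpha>) (c ?Y (bprod F g ?tZ \<beta> ?eZ))"
    using \<alpha>_prop pwbt_bprod_termap_closed[OF C F g tZ \<beta> eZ] fg by simp
  also have "\<dots> = bprod H (Fm f) (termap D (Fo ?Y)) (\<gamma> f \<alpha>) (bprod H (Fm g) ?dZ (\<gamma> g \<beta>) ?\<theta>)"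
    using \<gamma>_def[rule_format, of g] g g_Or fg \<beta> by auto
  also have "\<dots> = bprod H (Fm ?gf) ?dZ (bprod H (Fm f) (Fm g) (\<gamma> f \<alpha>) (\<gamma> g \<beta>)) ?\<theta>"
    using respecting_functor_bprod_assoc_termap[OF C D fun_resp H f g fg[symmetric] dZ \<gamma>\<alpha> \<gamma>\<beta>]
      \<theta> unfolding strong_orientation_def by simp
  finally show ?thesis
    using respecting_functor_strong_orientation_cancel[OF C D fun_resp \<theta> gf(1,3)]
      hom_in_carrier[OF \<gamma>(3) \<alpha>\<beta>]
      respecting_functor_bprod_closed[OF C fun_resp H f g fg[symmetric] \<gamma>\<alpha> \<gamma>\<beta>]
    by simp
qed

end
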